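(* Assume the setting below, including A1–A4, with any step size $\alpha>0$. Let $\Psi(x)=\Phi(x)-\Phi^*+\frac{1}{2\alpha}d^2(x,\mathcal{X})$. Then for every $k\ge0$, $$\Psi(x_{k+1})\le\left(1-\frac{\alpha\beta}{1+\alpha\beta}\right)\Psi(x_k)-\frac{1}{2\alpha}\|x_{k+1}-x_k\|^2+\frac{L(\tau+1)}{2}\sum_{j=k-\tau}^{k}\|x_{j+1}-x_j\|^2 .$$
   Context: Problem: minimize $\Phi(x)=F(x)+h(x)$ over $x\in\mathbb{R}^d$, where $F(x)=\sum_{n=1}^N f_n(x)$. Assumption A1: each $f_n:\mathbb{R}^d\to\mathbb{R}$ is convex and differentiable with $\|\nabla f_n(x)-\nabla f_n(y)\|\le L_n\|x-y\|$ for all $x,y$; set $L=\sum_{n=1}^N L_n$. Assumption A2: $h:\mathbb{R}^d\to(-\infty,\infty]$ is proper, closed, convex, and $\partial h(x)\neq\emptyset$ for all $x$ in its effective domain. Assumption A3: the delays $\tau_k^n$ ($k\ge0$, $n=1,\dots,N$) are integers with $\tau_k^n\in\{0,1,\dots,\tau\}$ for a fixed nonnegative integer $\tau$ (the delay parameter). Assumption A4 (quadratic growth): the set $\mathcal{X}$ of minimizers of $\Phi$ is nonempty, $\Phi^*$ denotes the minimal value of $\Phi$, and there is $\beta>0$ with $\Phi(x)-\Phi^*\ge\frac{\beta}{2}d^2(x,\mathcal{X})$ for all $x\in\mathbb{R}^d$, where $d(x,\mathcal{X})=\inf_{y\in\mathcal{X}}\|x-y\|$. PIAG method: given $x_0\in\mathbb{R}^d$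 and step size $\alpha>0$, with the convention $x_j=x_0$ for $j<0$, for $k\ge0$ set $g_k=\sum_{n=1}^N\nabla f_n(x_{k-\tau_k^n})$ and $$x_{k+1}=\arg\min_{x\in\mathbb{R}^d}\Big\{h(x)+\langle g_k,x-x_k\rangle+\frac{1}{2\alpha}\|x-x_k\|^2\Big\}.$$ In particular $\|x_{j+1}-x_j\|=0$ for $j<0$. *)

theory Defs
  imports "HOL-Analysis.Analysis"
begin

definition proper_fun :: "('a \<Rightarrow> ereal) \<Rightarrow> bool" where
  "proper_fun h \<longleftrightarrow> (\<forall>x. h x \<noteq> -\<infinity>) \<and> (\<exists>x. h x < \<infinity>)"

definition closed_fun :: "('a::topological_space \<Rightarrow> ereal) \<Rightarrow> bool" where
  "closed_fun h \<longleftrightarrow> closed {(x, t::real). h x \<le> ereal t}"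

definition convex_fun :: "('a::real_vector \<Rightarrow> ereal) \<Rightarrow> bool" where
  "convex_fun h \<longleftrightarrow> (\<forall>x y. \<forall>t::real. 0 \<le> t \<and> t \<le> 1 \<longrightarrow>
      h ((1 - t) *\<^sub>R x + t *\<^sub>R y) \<le> ereal (1 - t) * h x + ereal t * h y)"

definition edom :: "('a \<Rightarrow> ereal) \<Rightarrow> 'a set" where
  "edom h = {x. h x < \<infinity>}"

definition subdiff :: "('a::real_inner \<Rightarrow> ereal) \<Rightarrow> 'a \<Rightarrow> 'a set" where
  "subdiff h x = {g. \<forall>y. h y \<ge> h x + ereal (inner g (y - x))}"

definition ext_seq :: "(nat \<Rightarrow> 'a) \<Rightarrow> int \<Rightarrow> 'a" where
  "ext_seq x j = (if j < 0 then x 0 else x (nat j))"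

end

theory Submission imports Defs begin

text \<open>
  The descent lemma at the delayed iterates together with the gradient inequality gives, for
  every \<open>w\<close>, \<open>F(x\<^sub>k\<^sub>+\<^sub>1) \<le> F(w) + \<langle>g\<^sub>k, x\<^sub>k\<^sub>+\<^sub>1 - w\<rangle> + E\<^sub>k\<close>, where \<open>E\<^sub>k\<close> involves
  \<open>\<parallel>x\<^sub>k\<^sub>+\<^sub>1 - x\<^sub>k\<^sub>-\<^sub>d\<parallel>\<^sup>2\<close> and hence at most \<open>\<tau> + 1\<close> consecutive squared steps. The proximal step
  minimises a \<open>1/\<alpha>\<close>-strongly convex model, whence a three-point inequality. Together, for every
  minimiser \<open>w\<close>,
  \<open>\<Phi>(x\<^sub>k\<^sub>+\<^sub>1) - \<Phi>\<^sup>* + \<parallel>w - x\<^sub>k\<^sub>+\<^sub>1\<parallel>\<^sup>2/(2\<alpha>) \<le> \<parallel>w - x\<^sub>k\<parallel>\<^sup>2/(2\<alpha>) - \<parallel>x\<^sub>k\<^sub>+\<^sub>1 - x\<^sub>k\<parallel>\<^sup>2/(2\<alpha>) + E\<^sub>k\<close>;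
  minimising over \<open>w\<close> and using quadratic growth to trade part of \<open>d\<^sup>2(x\<^sub>k, \<X>)/(2\<alpha>)\<close> for
  \<open>\<Phi>(x\<^sub>k) - \<Phi>\<^sup>*\<close> yields the factor \<open>1/(1 + \<alpha>\<beta>)\<close>.
\<close>

lemma convex_on_gradient_inequality:
  fixes f :: "'a::real_inner \<Rightarrow> real"
  assumes convex: "convex_on UNIV f"
    and deriv: "\<And>z. (f has_derivative (\<lambda>v. inner (G z) v)) (at z)"
  shows "f y + inner (G y) (z - y) \<le> f z"
proof -
  define v where "v = z - y"
  define \<phi> where "\<phi> = (\<lambda>t::real. f (y + t *\<^sub>R v))"
  have "convex_on UNIV \<phi>"
  proof (rule convex_onI)
    fix t a b :: real assume t: "0 < t" "t < 1"
    have "y + ((1 - t) *\<^sub>R a + t *\<^sub>R b) *\<^sub>R v = (1 - t) *\<^sub>R (y + a *\<^sub>R v) + t *\<^sub>R (y + b *\<^sub>R v)"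
      by (simp add: algebra_simps)
    then show "\<phi> ((1 - t) *\<^sub>R a + t *\<^sub>R b) \<le> (1 - t) * \<phi> a + t * \<phi> b"
      unfolding \<phi>_def using convex_onD[OF convex, of t "y + a *\<^sub>R v" "y + b *\<^sub>R v"] t by simp
  qed simp
  moreover have "(\<phi> has_field_derivative inner (G y) v) (at 0)"
  proof -
    have "((\<lambda>t. y + t *\<^sub>R v) has_derivative (\<lambda>t. t *\<^sub>R v)) (at 0)"
      by (auto intro!: derivative_eq_intros)
    from has_derivative_compose[OF this deriv[of "y + 0 *\<^sub>R v"]]
    show ?thesis by (simp add: \<phi>_def o_def has_field_derivative_def mult_commute_abs)
  qed
  ultimately have "inner (G y) v \<le> \<phi> 1 - \<phi> 0"
    using convex_on_imp_above_tangent[of UNIV \<phi> 0 1] by simp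
  then show ?thesis by (simp add: \<phi>_def v_def)
qed

lemma lipschitz_gradient_descent_lemma:
  fixes f :: "'a::real_inner \<Rightarrow> real"
  assumes deriv: "\<And>z. (f has_derivative (\<lambda>v. inner (G z) v)) (at z)"
    and lipschitz: "\<And>a b. norm (G a - G b) \<le> L * norm (a - b)"
  shows "f z \<le> f y + inner (G y) (z - y) + L / 2 * (norm (z - y))\<^sup>2"
proof -
  define v where "v = z - y"
  define \<psi> where "\<psi> = (\<lambda>t::real. f (y + t *\<^sub>R v) - t * inner (G y) v - L / 2 * t\<^sup>2 * (norm v)\<^sup>2)"
  have "\<psi> 1 \<le> \<psi> 0"
  proof (rule DERIV_nonpos_imp_nonincreasing[of 0 1 \<psi>])
    fix t :: real assume t: "0 \<le> t" "t \<le> 1"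
    have "((\<lambda>t. y + t *\<^sub>R v) has_derivative (\<lambda>t. t *\<^sub>R v)) (at t)"
      by (auto intro!: derivative_eq_intros)
    from has_derivative_compose[OF this deriv[of "y + t *\<^sub>R v"]]
    have f_deriv: "((\<lambda>t. f (y + t *\<^sub>R v)) has_field_derivative inner (G (y + t *\<^sub>R v)) v) (at t)"
      by (simp add: o_def has_field_derivative_def mult_commute_abs)
    have D: "(\<psi> has_field_derivative
        (inner (G (y + t *\<^sub>R v)) v - inner (G y) v - L * t * (norm v)\<^sup>2)) (at t)"
      unfolding \<psi>_def by (rule derivative_eq_intros f_deriv refl | simp)+
    have "inner (G (y + t *\<^sub>R v)) v - inner (G y) v = inner (G (y + t *\<^sub>R v) - G y) v"
      by (simp add: inner_diff_left)
    also have "\<dots> \<le> norm (G (y + t *\<^sub>R v) - G y) * norm v" by (rule norm_cauchy_schwarz)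
    also have "\<dots> \<le> (L * norm (t *\<^sub>R v)) * norm v"
      using lipschitz[of "y + t *\<^sub>R v" y] by (intro mult_right_mono) auto
    also have "\<dots> = L * t * (norm v)\<^sup>2" using t by (simp add: power2_eq_square)
    finally show "\<exists>y. DERIV \<psi> t :> y \<and> y \<le> 0" using D by auto
  qed simp
  then show ?thesis by (simp add: \<psi>_def v_def)
qed

lemma lipschitz_constant_nonneg:
  fixes G :: "'a::euclidean_space \<Rightarrow> 'b::real_normed_vector"
  assumes "\<And>a b. norm (G a - G b) \<le> L * norm (a - b)"
  shows "L \<ge> 0"
proof -
  obtain e :: 'a where "e \<in> Basis" using SOME_Basis by blast
  then have "norm e > 0" using nonzero_Basis by auto
  moreover have "0 \<le> L * norm e" using order_trans[OF norm_ge_zero assms[of e 0]] by simp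
  ultimately show ?thesis by (simp add: zero_le_mult_iff)
qed

lemma convex_smooth_linearisation_at:
  fixes f :: "'a::real_inner \<Rightarrow> real"
  assumes "convex_on UNIV f"
    and "\<And>z. (f has_derivative (\<lambda>v. inner (G z) v)) (at z)"
    and "\<And>a b. norm (G a - G b) \<le> L * norm (a - b)"
  shows "f p \<le> f w + inner (G y) (p - w) + L / 2 * (norm (p - y))\<^sup>2"
proof -
  have "f p \<le> f y + inner (G y) (p - y) + L / 2 * (norm (p - y))\<^sup>2"
    by (rule lipschitz_gradient_descent_lemma[OF assms(2,3)])
  moreover have "f y + inner (G y) (w - y) \<le> f w"
    by (rule convex_on_gradient_inequality[OF assms(1,2)])
  moreover have "inner (G y) (p - y) - inner (G y) (w - y) = inner (G y) (p - w)"
    by (simp add: inner_diff_right)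
  ultimately show ?thesis by linarith
qed

lemma sum_convex_smooth_linearisation_at:
  fixes f :: "'i \<Rightarrow> 'a::euclidean_space \<Rightarrow> real"
  assumes "\<And>n. n \<in> I \<Longrightarrow> convex_on UNIV (f n)"
    and "\<And>n z. n \<in> I \<Longrightarrow> (f n has_derivative (\<lambda>v. inner (G n z) v)) (at z)"
    and "\<And>n a b. n \<in> I \<Longrightarrow> norm (G n a - G n b) \<le> L n * norm (a - b)"
    and dist: "\<And>n. n \<in> I \<Longrightarrow> (norm (p - y n))\<^sup>2 \<le> D"
  shows "(\<Sum>n\<in>I. f n p) \<le> (\<Sum>n\<in>I. f n w) + inner (\<Sum>n\<in>I. G n (y n)) (p - w) + (\<Sum>n\<in>I. L n) * D / 2"
proof -
  have "f n p \<le> f n w + inner (G n (y n)) (p - w) + L n / 2 * D" if n: "n \<in> I" for n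
  proof -
    have "L n / 2 * (norm (p - y n))\<^sup>2 \<le> L n / 2 * D"
      using dist[OF n] lipschitz_constant_nonneg[OF assms(3)[OF n]] by (intro mult_left_mono) auto
    then show ?thesis using convex_smooth_linearisation_at[OF assms(1-3)[OF n], of p w "y n"] by linarith
  qed
  then have "(\<Sum>n\<in>I. f n p) \<le> (\<Sum>n\<in>I. f n w + inner (G n (y n)) (p - w) + L n / 2 * D)"
    by (rule sum_mono)
  also have "\<dots> = (\<Sum>n\<in>I. f n w) + inner (\<Sum>n\<in>I. G n (y n)) (p - w) + (\<Sum>n\<in>I. L n) * D / 2"
    by (simp only: sum.distrib inner_sum_left sum_distrib_right) (simp add: sum_divide_distrib mult.commute)
  finally show ?thesis .
qed

lemma power2_norm_convex_combination:
  fixes a b :: "'a::real_inner"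
  shows "(norm ((1 - t) *\<^sub>R a + t *\<^sub>R b))\<^sup>2
    = (1 - t) * (norm a)\<^sup>2 + t * (norm b)\<^sup>2 - t * (1 - t) * (norm (b - a))\<^sup>2"
  by (simp add: power2_norm_eq_inner inner_add_left inner_add_right inner_diff_left
      inner_diff_right inner_commute algebra_simps)

lemma le_diff_if_forall_weight_le:
  fixes a b c :: real
  assumes "\<And>t. 0 < t \<Longrightarrow> t < 1 \<Longrightarrow> a \<le> b - (1 - t) * c"
  shows "a \<le> b - c"
proof (rule field_le_epsilon)
  fix e :: real assume e: "0 < e"
  define t where "t = min (1/2) (e / (\<bar>c\<bar> + 1))"
  have t: "0 < t" "t < 1" using e by (auto simp: t_def)
  have "t * c \<le> t * \<bar>c\<bar>" using t by (intro mult_left_mono) auto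
  also have "\<dots> \<le> e / (\<bar>c\<bar> + 1) * \<bar>c\<bar>" by (intro mult_right_mono) (auto simp: t_def)
  also have "\<dots> \<le> e" using e by (simp add: divide_le_eq)
  finally show "a \<le> b - c + e" using assms[OF t] by (simp add: algebra_simps)
qed

text \<open>The proximal objective is \<open>h\<close> plus a quadratic with Hessian \<open>1/\<alpha>\<close>; comparing its minimiser
  \<open>p\<close> with the points of the segment towards \<open>z\<close> gives the strong-convexity gain \<open>\<parallel>z - p\<parallel>\<^sup>2/(2\<alpha>)\<close>.\<close>

lemma prox_three_point_inequality:
  fixes h :: "'a::real_inner \<Rightarrow> ereal"
  assumes convex: "convex_fun h" and "\<alpha> > 0"
    and prox: "\<And>z. h p + ereal (inner g (p - c) + 1 / (2 * \<alpha>) * (norm (p - c))\<^sup>2)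
                 \<le> h z + ereal (inner g (z - c) + 1 / (2 * \<alpha>) * (norm (z - c))\<^sup>2)"
    and hp: "h p = ereal hp" and hz: "h z = ereal hz"
  shows "hp + inner g (p - c) + 1 / (2 * \<alpha>) * (norm (p - c))\<^sup>2 + 1 / (2 * \<alpha>) * (norm (z - p))\<^sup>2
         \<le> hz + inner g (z - c) + 1 / (2 * \<alpha>) * (norm (z - c))\<^sup>2"
proof -
  define q where "q = (\<lambda>z. inner g (z - c) + 1 / (2 * \<alpha>) * (norm (z - c))\<^sup>2)"
  define N where "N = 1 / (2 * \<alpha>) * (norm (z - p))\<^sup>2"
  have q_segment: "q ((1 - t) *\<^sub>R p + t *\<^sub>R z) = (1 - t) * q p + t * q z - t * (1 - t) * N" for t
  proof -
    have shift: "(1 - t) *\<^sub>R p + t *\<^sub>R z - c = (1 - t) *\<^sub>R (p - c) + t *\<^sub>R (z - c)"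
      by (simp add: algebra_simps)
    have "z - p = (z - c) - (p - c)" by simp
    then show ?thesis
      unfolding q_def N_def shift power2_norm_convex_combination
      by (simp add: inner_add_right inner_diff_right algebra_simps,
          simp add: add_divide_distrib[symmetric] diff_divide_distrib[symmetric])
  qed
  have "hp + q p \<le> hz + q z - (1 - t) * N" if t: "0 < t" "t < 1" for t
  proof -
    define zt where "zt = (1 - t) *\<^sub>R p + t *\<^sub>R z"
    have "h zt \<le> ereal (1 - t) * h p + ereal t * h z"
      using convex t unfolding convex_fun_def zt_def by auto
    then have h_zt: "h zt \<le> ereal ((1 - t) * hp + t * hz)" by (simp add: hp hz)
    have "ereal (hp + q p) = h p + ereal (q p)" by (simp add: hp)
    also have "\<dots> \<le> h zt + ereal (q zt)" using prox[of zt] unfolding q_def .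
    also have "\<dots> \<le> ereal ((1 - t) * hp + t * hz) + ereal (q zt)" using h_zt by (rule add_right_mono)
    finally have "hp + q p \<le> (1 - t) * hp + t * hz + q zt" by simp
    then have "t * (hp + q p) \<le> t * (hz + q z - (1 - t) * N)"
      using q_segment[of t] by (simp add: zt_def algebra_simps)
    then show ?thesis using t by simp
  qed
  then have "hp + q p \<le> hz + q z - N" by (rule le_diff_if_forall_weight_le)
  then show ?thesis by (simp add: q_def N_def)
qed

text \<open>Truncated subtraction \<open>k - d\<close> matches the convention \<open>x\<^sub>j = x\<^sub>0\<close> for \<open>j < 0\<close> of \<open>ext_seq\<close>.\<close>

lemma ext_seq_telescope:
  fixes x :: "nat \<Rightarrow> 'a::ab_group_add"
  shows "x (Suc k) - x (k - d) = (\<Sum>j\<in>{int k - int d .. int k}. ext_seq x (j + 1) - ext_seq x j)"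
proof (induction d)
  case 0
  have "{int k .. int k} = {int k}" and "nat (int k + 1) = Suc k" by simp_all
  then show ?case by (simp add: ext_seq_def)
next
  case (Suc d)
  have split: "{int k - int (Suc d) .. int k} = insert (int k - int d - 1) {int k - int d .. int k}"
    by auto
  have "(\<Sum>j\<in>{int k - int (Suc d) .. int k}. ext_seq x (j + 1) - ext_seq x j)
      = (ext_seq x (int k - int d) - ext_seq x (int k - int d - 1)) + (x (Suc k) - x (k - d))"
    unfolding split Suc.IH by (subst sum.insert) auto
  also have "ext_seq x (int k - int d) - ext_seq x (int k - int d - 1) = x (k - d) - x (k - Suc d)"
    by (auto simp: ext_seq_def nat_diff_distrib' intro!: arg_cong[where f=x])
  finally show ?case by simp
qed

lemma power2_norm_delayed_diff_le:
  fixes x :: "nat \<Rightarrow> 'a::real_normed_vector"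
  assumes "d \<le> \<tau>"
  shows "(norm (x (Suc k) - x (k - d)))\<^sup>2 \<le> (real \<tau> + 1) *
           (\<Sum>j\<in>{int k - int \<tau> .. int k}. (norm (ext_seq x (j + 1) - ext_seq x j))\<^sup>2)"
proof -
  define D where "D = (\<lambda>j. norm (ext_seq x (j + 1) - ext_seq x j))"
  define I where "I = {int k - int d .. int k}"
  have "norm (x (Suc k) - x (k - d)) \<le> (\<Sum>j\<in>I. D j)"
    unfolding ext_seq_telescope I_def D_def by (rule norm_sum)
  then have "(norm (x (Suc k) - x (k - d)))\<^sup>2 \<le> (\<Sum>j\<in>I. D j)\<^sup>2"
    by (intro power_mono) auto
  also have "\<dots> \<le> (\<Sum>j\<in>I. (D j)\<^sup>2) * card I" by (rule sum_squared_le_sum_of_squares)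
  also have "card I = d + 1" unfolding I_def by simp
  also have "(\<Sum>j\<in>I. (D j)\<^sup>2) * real (d + 1) \<le> (\<Sum>j\<in>{int k - int \<tau> .. int k}. (D j)\<^sup>2) * (real \<tau> + 1)"
    using assms unfolding I_def by (intro mult_mono sum_mono2) (auto intro: sum_nonneg)
  finally show ?thesis by (simp add: D_def mult.commute)
qed

lemma le_power2_infdist:
  assumes "X \<noteq> {}" and le: "\<And>w. w \<in> X \<Longrightarrow> r \<le> (dist p w)\<^sup>2"
  shows "r \<le> (infdist p X)\<^sup>2"
proof (cases "r \<le> 0")
  case True
  then show ?thesis by (meson order_trans zero_le_power2)
next
  case False
  have "sqrt r \<le> dist p w" if "w \<in> X" for w
    using le[OF that] by (simp add: real_le_lsqrt)
  then have "sqrt r \<le> infdist p X"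
    unfolding infdist_notempty[OF assms(1)] using assms(1) by (intro cINF_greatest) auto
  then have "(sqrt r)\<^sup>2 \<le> (infdist p X)\<^sup>2" using False by (intro power_mono) auto
  then show ?thesis using False by simp
qed

lemma prox_step_infdist_descent:
  fixes F :: "'a::real_inner \<Rightarrow> real" and h :: "'a \<Rightarrow> ereal"
  assumes convex: "convex_fun h" and proper: "proper_fun h" and \<alpha>: "\<alpha> > 0"
    and prox: "\<And>z. h p + ereal (inner g (p - c) + 1 / (2 * \<alpha>) * (norm (p - c))\<^sup>2)
                 \<le> h z + ereal (inner g (z - c) + 1 / (2 * \<alpha>) * (norm (z - c))\<^sup>2)"
    and model: "\<And>w. F p \<le> F w + inner g (p - w) + E"
    and X: "X \<noteq> {}" "\<And>w. w \<in> X \<Longrightarrow> ereal (F w) + h w = ereal P"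
  shows "ereal (F p) + h p - ereal P + ereal (1 / (2 * \<alpha>) * (infdist p X)\<^sup>2)
    \<le> ereal (1 / (2 * \<alpha>) * (infdist c X)\<^sup>2 - 1 / (2 * \<alpha>) * (norm (p - c))\<^sup>2 + E)"
proof -
  have h_not_minf: "h z \<noteq> -\<infinity>" for z using proper by (simp add: proper_fun_def)
  obtain y0 where "h y0 < \<infinity>" using proper by (auto simp: proper_fun_def)
  then have "h p \<noteq> \<infinity>" using prox[of y0] by auto
  then obtain hp where hp: "h p = ereal hp" using h_not_minf[of p] by (cases "h p") auto
  define R where "R = F p + hp - P + 1 / (2 * \<alpha>) * (norm (p - c))\<^sup>2 - E"
  have "2 * \<alpha> * (R + 1 / (2 * \<alpha>) * (infdist p X)\<^sup>2) \<le> (dist c w)\<^sup>2" if w: "w \<in> X" for w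
  proof -
    have "h w = ereal (P - F w)"
      using X(2)[OF w] h_not_minf[of w] by (cases "h w") auto
    from prox_three_point_inequality[OF convex \<alpha> prox hp this]
    have "hp + inner g (p - c) + 1 / (2 * \<alpha>) * (norm (p - c))\<^sup>2 + 1 / (2 * \<alpha>) * (norm (w - p))\<^sup>2
      \<le> P - F w + inner g (w - c) + 1 / (2 * \<alpha>) * (norm (w - c))\<^sup>2" .
    moreover have "inner g (w - c) - inner g (p - c) + inner g (p - w) = 0"
      by (simp add: inner_diff_right)
    moreover have "1 / (2 * \<alpha>) * (infdist p X)\<^sup>2 \<le> 1 / (2 * \<alpha>) * (norm (w - p))\<^sup>2"
      using infdist_le[OF w, of p] infdist_nonneg \<alpha>
      by (intro mult_left_mono power_mono) (auto simp: dist_norm norm_minus_commute)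
    ultimately have "R + 1 / (2 * \<alpha>) * (infdist p X)\<^sup>2 \<le> 1 / (2 * \<alpha>) * (dist c w)\<^sup>2"
      using model[of w] unfolding R_def by (simp add: dist_norm norm_minus_commute)
    from mult_left_mono[OF this, of "2 * \<alpha>"] show ?thesis using \<alpha> by simp
  qed
  then have "2 * \<alpha> * (R + 1 / (2 * \<alpha>) * (infdist p X)\<^sup>2) \<le> (infdist c X)\<^sup>2"
    by (rule le_power2_infdist[OF X(1)])
  from divide_right_mono[OF this, of "2 * \<alpha>"]
  have "R + 1 / (2 * \<alpha>) * (infdist p X)\<^sup>2 \<le> 1 / (2 * \<alpha>) * (infdist c X)\<^sup>2"
    using \<alpha> by simp
  then show ?thesis by (simp add: hp R_def)
qed

text \<open>Quadratic growth converts a share \<open>\<alpha>\<beta>/(1 + \<alpha>\<beta>)\<close> of the distance term into objective gap;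
  \<open>\<phi> = \<infinity>\<close> is allowed, and then the right-hand side is \<open>\<infinity>\<close>.\<close>

lemma quadratic_growth_contraction:
  fixes \<phi> :: ereal
  assumes \<alpha>: "\<alpha> > 0" and \<beta>: "\<beta> > 0" and "\<phi> \<noteq> -\<infinity>"
    and growth: "ereal (\<beta> / 2 * d\<^sup>2) \<le> \<phi> - ereal P"
  shows "ereal (1 / (2 * \<alpha>) * d\<^sup>2 - a + E)
    \<le> ereal (1 - \<alpha> * \<beta> / (1 + \<alpha> * \<beta>)) * (\<phi> - ereal P + ereal (1 / (2 * \<alpha>) * d\<^sup>2))
       - ereal a + ereal E"
proof -
  have "1 + \<alpha> * \<beta> > 0" using \<alpha> \<beta> by (simp add: add_pos_pos)
  then have factor: "1 - \<alpha> * \<beta> / (1 + \<alpha> * \<beta>) = 1 / (1 + \<alpha> * \<beta>)"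
    and pos: "1 / (1 + \<alpha> * \<beta>) > 0" by (simp_all add: field_simps)
  show ?thesis
  proof (cases \<phi>)
    case (real r)
    have "(1 + \<alpha> * \<beta>) * (1 / (2 * \<alpha>) * d\<^sup>2) = 1 / (2 * \<alpha>) * d\<^sup>2 + \<beta> / 2 * d\<^sup>2"
      using \<alpha> by (simp add: field_simps)
    also have "\<dots> \<le> r - P + 1 / (2 * \<alpha>) * d\<^sup>2" using growth real by simp
    finally have "1 / (2 * \<alpha>) * d\<^sup>2 \<le> 1 / (1 + \<alpha> * \<beta>) * (r - P + 1 / (2 * \<alpha>) * d\<^sup>2)"
      using \<alpha> \<beta> by (simp add: field_simps add_pos_pos)
    then show ?thesis by (simp add: real factor)
  next
    case PInf
    then show ?thesis using pos by (simp add: factor)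
  qed (use assms in simp)
qed

lemma ereal_argmin_finite_value:
  fixes \<Phi> :: "'a \<Rightarrow> ereal"
  assumes "w0 \<in> {w. \<forall>y. \<Phi> w \<le> \<Phi> y}" and "\<Phi> y0 < \<infinity>" and "\<And>y. \<Phi> y \<noteq> -\<infinity>"
  obtains P where "(INF y. \<Phi> y) = ereal P" and "\<And>w. w \<in> {w. \<forall>y. \<Phi> w \<le> \<Phi> y} \<Longrightarrow> \<Phi> w = ereal P"
proof -
  have "\<Phi> w0 \<le> \<Phi> y0" using assms(1) by blast
  then obtain P where P: "\<Phi> w0 = ereal P"
    using assms(2) assms(3)[of w0] by (cases "\<Phi> w0") auto
  have INF_eq: "(INF y. \<Phi> y) = \<Phi> w0"
  proof (rule antisym)
    show "(INF y. \<Phi> y) \<le> \<Phi> w0" by (rule INF_lower) simp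
    show "\<Phi> w0 \<le> (INF y. \<Phi> y)" using assms(1) by (intro INF_greatest) simp
  qed
  show ?thesis
  proof (rule that)
    show "(INF y. \<Phi> y) = ereal P" using INF_eq P by simp
    fix w assume "w \<in> {w. \<forall>y. \<Phi> w \<le> \<Phi> y}"
    then have "\<Phi> w \<le> \<Phi> w0" "\<Phi> w0 \<le> \<Phi> w" using assms(1) by simp_all
    then show "\<Phi> w = ereal P" using P by simp
  qed
qed

theorem mainTheorem3:
  fixes N :: nat
    and f :: "nat \<Rightarrow> 'a::euclidean_space \<Rightarrow> real"
    and gf :: "nat \<Rightarrow> 'a \<Rightarrow> 'a"
    and Ln :: "nat \<Rightarrow> real"
    and h :: "'a \<Rightarrow> ereal"
    and delay :: "nat \<Rightarrow> nat \<Rightarrow> nat"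
    and \<tau> :: nat
    and \<alpha> \<beta> :: real
    and x :: "nat \<Rightarrow> 'a"
    and k :: nat
  assumes A1_convex: "\<And>n. n \<in> {1..N} \<Longrightarrow> convex_on UNIV (f n)"
    and A1_grad: "\<And>n z. n \<in> {1..N} \<Longrightarrow> (f n has_derivative (\<lambda>v. inner (gf n z) v)) (at z)"
    and A1_lip: "\<And>n y z. n \<in> {1..N} \<Longrightarrow> norm (gf n y - gf n z) \<le> Ln n * norm (y - z)"
    and A2_proper: "proper_fun h"
    and A2_closed: "closed_fun h"
    and A2_convex: "convex_fun h"
    and A2_subdiff: "\<And>z. z \<in> edom h \<Longrightarrow> subdiff h z \<noteq> {}"
    and A3: "\<And>j n. n \<in> {1..N} \<Longrightarrow> delay j n \<le> \<tau>"
    and A4_nonempty: "{z. \<forall>y. (\<Sum>n=1..N. f n z) + h z \<le> (\<Sum>n=1..N. f n y) + h y} \<noteq> {}"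
    and A4_qg: "\<beta> > 0"
      "\<And>z. (\<Sum>n=1..N. f n z) + h z - (INF y. (\<Sum>n=1..N. f n y) + h y)
             \<ge> ereal (\<beta> / 2 * (infdist z {w. \<forall>y. (\<Sum>n=1..N. f n w) + h w \<le> (\<Sum>n=1..N. f n y) + h y})\<^sup>2)"
    and step: "\<alpha> > 0"
    and PIAG: "\<And>j. \<forall>z. h (x (Suc j)) + ereal (inner (\<Sum>n=1..N. gf n (x (j - delay j n))) (x (Suc j) - x j)
                          + 1 / (2 * \<alpha>) * (norm (x (Suc j) - x j))\<^sup>2)
                   \<le> h z + ereal (inner (\<Sum>n=1..N. gf n (x (j - delay j n))) (z - x j)
                          + 1 / (2 * \<alpha>) * (norm (z - x j))\<^sup>2)"
  shows "let \<Phi> = (\<lambda>z. ereal (\<Sum>n=1..N. f n z) + h z);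
             \<Phi>star = (INF y. \<Phi> y);
             \<X> = {w. \<forall>y. \<Phi> w \<le> \<Phi> y};
             \<Psi> = (\<lambda>z. \<Phi> z - \<Phi>star + ereal (1 / (2 * \<alpha>) * (infdist z \<X>)\<^sup>2));
             L = (\<Sum>n=1..N. Ln n)
         in \<Psi> (x (Suc k))
            \<le> ereal (1 - \<alpha> * \<beta> / (1 + \<alpha> * \<beta>)) * \<Psi> (x k)
               - ereal (1 / (2 * \<alpha>) * (norm (x (Suc k) - x k))\<^sup>2)
               + ereal (L * (real \<tau> + 1) / 2 *
                   (\<Sum>j\<in>{int k - int \<tau> .. int k}. (norm (ext_seq x (j + 1) - ext_seq x j))\<^sup>2))"
proof -
  define F where "F = (\<lambda>z. \<Sum>n=1..N. f n z)"
  define \<Phi> where "\<Phi> = (\<lambda>z. ereal (F z) + h z)"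
  define X where "X = {w. \<forall>y. \<Phi> w \<le> \<Phi> y}"
  define S where "S = (\<Sum>j\<in>{int k - int \<tau> .. int k}. (norm (ext_seq x (j + 1) - ext_seq x j))\<^sup>2)"
  define E where "E = (\<Sum>n=1..N. Ln n) * (real \<tau> + 1) / 2 * S"
  define g where "g = (\<Sum>n=1..N. gf n (x (k - delay k n)))"
  have X_eq: "{w. \<forall>y. (\<Sum>n=1..N. f n w) + h w \<le> (\<Sum>n=1..N. f n y) + h y} = X"
    by (simp add: X_def \<Phi>_def F_def)
  obtain w0 where "w0 \<in> X" using A4_nonempty unfolding X_eq by blast
  moreover obtain y0 where "\<Phi> y0 < \<infinity>" using A2_proper by (auto simp: proper_fun_def \<Phi>_def)
  moreover have \<Phi>_not_minf: "\<Phi> y \<noteq> -\<infinity>" for y using A2_proper by (simp add: proper_fun_def \<Phi>_def)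
  ultimately obtain P where P_star: "(INF y. \<Phi> y) = ereal P" and P: "\<And>w. w \<in> X \<Longrightarrow> \<Phi> w = ereal P"
    by (rule ereal_argmin_finite_value[of w0 \<Phi> y0, folded X_def]) blast
  have growth: "ereal (\<beta> / 2 * (infdist (x k) X)\<^sup>2) \<le> \<Phi> (x k) - ereal P"
    using A4_qg(2)[of "x k"] P_star unfolding X_eq by (simp add: \<Phi>_def F_def)
  have "F (x (Suc k)) \<le> F w + inner g (x (Suc k) - w) + (\<Sum>n=1..N. Ln n) * ((real \<tau> + 1) * S) / 2" for w
    unfolding F_def g_def S_def
    by (rule sum_convex_smooth_linearisation_at[where y="\<lambda>n. x (k - delay k n)",
          OF A1_convex A1_grad A1_lip power2_norm_delayed_diff_le[OF A3]])
  then have model: "F (x (Suc k)) \<le> F w + inner g (x (Suc k) - w) + E" for w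
    by (simp add: E_def mult.assoc)
  have "\<Phi> (x (Suc k)) - ereal P + ereal (1 / (2 * \<alpha>) * (infdist (x (Suc k)) X)\<^sup>2)
    \<le> ereal (1 / (2 * \<alpha>) * (infdist (x k) X)\<^sup>2 - 1 / (2 * \<alpha>) * (norm (x (Suc k) - x k))\<^sup>2 + E)"
    unfolding \<Phi>_def
  proof (rule prox_step_infdist_descent[OF A2_convex A2_proper step _ model])
    show "X \<noteq> {}" using \<open>w0 \<in> X\<close> by blast
  qed (use PIAG[of k] P in \<open>auto simp: g_def \<Phi>_def\<close>)
  also have "\<dots> \<le> ereal (1 - \<alpha> * \<beta> / (1 + \<alpha> * \<beta>))
        * (\<Phi> (x k) - ereal P + ereal (1 / (2 * \<alpha>) * (infdist (x k) X)\<^sup>2))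
      - ereal (1 / (2 * \<alpha>) * (norm (x (Suc k) - x k))\<^sup>2) + ereal E"
    by (rule quadratic_growth_contraction[OF step A4_qg(1) \<Phi>_not_minf growth])
  finally show ?thesis
    unfolding Let_def P_star[symmetric] E_def S_def \<Phi>_def F_def X_def .
qed

end
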